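(* Let $H$ be a graph and let $G$ be the graph obtained from $H$ by subdividing every edge of $H$ exactly twice (i.e., replacing each edge $xy$ of $H$ by a path $x\,a\,b\,y$ with two new internal vertices $a,b$). Let $m=|E(G)|$. Then ${\rm I}_e(G) \geq \frac{1}{3}m$.
   Context: All graphs are finite and simple. A graph is locally irregular if no two adjacent vertices have the same degree. For a graph $G$, an edge-irregulator of $G$ is a set $S\subseteq E(G)$ such that $G-S$ (the graph obtained by deleting the edges of $S$, keeping all vertices) is locally irregular. ${\rm I}_e(G)$ denotes the minimum cardinality of an edge-irregulator of $G$. *)

theory Defs
  imports Complex_Main
begin

definition simple_graph :: "'a set \<Rightarrow> 'a set set \<Rightarrow> bool" where
  "simple_graph V E \<longleftrightarrow> finite V \<and>
     (\<forall>e\<in>E. \<exists>x y. x \<noteq> y \<and> x \<in> V \<and> y \<in> V \<and> e = {x, y})"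

definition degree :: "'a set set \<Rightarrow> 'a \<Rightarrow> nat" where
  "degree E v = card {e \<in> E. v \<in> e}"

definition locally_irregular :: "'a set \<Rightarrow> 'a set set \<Rightarrow> bool" where
  "locally_irregular V E \<longleftrightarrow>
     (\<forall>u\<in>V. \<forall>v\<in>V. {u, v} \<in> E \<longrightarrow> u \<noteq> v \<longrightarrow> degree E u \<noteq> degree E v)"

definition edge_irregulator :: "'a set \<Rightarrow> 'a set set \<Rightarrow> 'a set set \<Rightarrow> bool" where
  "edge_irregulator V E S \<longleftrightarrow> S \<subseteq> E \<and> locally_irregular V (E - S)"

definition Ie :: "'a set \<Rightarrow> 'a set set \<Rightarrow> nat" where
  "Ie V E = (LEAST k. \<exists>S. edge_irregulator V E S \<and> card S = k)"

text \<open>Subdividing every edge twice: edge {x,y} becomes the path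
  Inl x -- Inr (x,y) -- Inr (y,x) -- Inl y.\<close>
definition sub2_V :: "'a set \<Rightarrow> 'a set set \<Rightarrow> ('a + 'a \<times> 'a) set" where
  "sub2_V V E = Inl ` V \<union> {Inr (x, y) | x y. x \<noteq> y \<and> {x, y} \<in> E}"

definition sub2_E :: "'a set set \<Rightarrow> ('a + 'a \<times> 'a) set set" where
  "sub2_E E = (\<Union>(x, y) \<in> {(x, y). x \<noteq> y \<and> {x, y} \<in> E}.
                 {{Inl x, Inr (x, y)}, {Inr (x, y), Inr (y, x)}})"

end

theory Submission
  imports Defs
begin

text \<open>Every edge xy of H becomes a path of three edges in G whose two inner vertices have
  degree 2 in G. An edge-irregulator S must delete an edge of each of these paths, since
  otherwise the middle edge joins two vertices of degree 2. Hence mapping every edge of G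
  to the edge of H it subdivides sends S onto E(H), and m \<le> 3 |E(H)| \<le> 3 |S|.\<close>

lemma edge_irregulator_all_edges: "edge_irregulator V E E"
  unfolding edge_irregulator_def locally_irregular_def by simp

lemma Ie_attained: "\<exists>S. edge_irregulator V E S \<and> card S = Ie V E"
  unfolding Ie_def by (rule LeastI_ex) (use edge_irregulator_all_edges in blast)

lemma simple_graph_finite_edges:
  assumes "simple_graph V E"
  shows "finite E"
proof (rule finite_subset)
  show "E \<subseteq> Pow V" using assms unfolding simple_graph_def by fastforce
  show "finite (Pow V)" using assms unfolding simple_graph_def by simp
qed

text \<open>The edge of H subdivided by an edge of G, read off from the labels of its subdivision
  vertices.\<close>
definition sub2_origin :: "('a + 'a \<times> 'a) set \<Rightarrow> 'a set" where
  "sub2_origin t = {z. \<exists>w. Inr (z, w) \<in> t \<or> Inr (w, z) \<in> t}"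

lemma sub2_origin_outer [simp]: "sub2_origin {Inl x, Inr (x, y)} = {x, y}"
  unfolding sub2_origin_def by auto

lemma sub2_origin_middle [simp]: "sub2_origin {Inr (x, y), Inr (y, x)} = {x, y}"
  unfolding sub2_origin_def by auto

lemma sub2_E_cases:
  assumes "t \<in> sub2_E E"
  obtains (outer) x y where "x \<noteq> y" "{x, y} \<in> E" "t = {Inl x, Inr (x, y)}"
  | (middle) x y where "x \<noteq> y" "{x, y} \<in> E" "t = {Inr (x, y), Inr (y, x)}"
  using assms unfolding sub2_E_def by auto

lemma sub2_origin_in_edges: "t \<in> sub2_E E \<Longrightarrow> sub2_origin t \<in> E"
  by (erule sub2_E_cases) auto

lemma sub2_E_outer: "x \<noteq> y \<Longrightarrow> {x, y} \<in> E \<Longrightarrow> {Inl x, Inr (x, y)} \<in> sub2_E E"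
  unfolding sub2_E_def by blast

lemma sub2_E_middle: "x \<noteq> y \<Longrightarrow> {x, y} \<in> E \<Longrightarrow> {Inr (x, y), Inr (y, x)} \<in> sub2_E E"
  unfolding sub2_E_def by blast

lemma sub2_fibre_subset:
  "{t \<in> sub2_E E. sub2_origin t = {a, b}}
     \<subseteq> {{Inl a, Inr (a, b)}, {Inl b, Inr (b, a)}, {Inr (a, b), Inr (b, a)}}"
proof
  fix t assume "t \<in> {t \<in> sub2_E E. sub2_origin t = {a, b}}"
  then have t: "t \<in> sub2_E E" "sub2_origin t = {a, b}" by auto
  from t(1) show "t \<in> {{Inl a, Inr (a, b)}, {Inl b, Inr (b, a)}, {Inr (a, b), Inr (b, a)}}"
  proof (cases rule: sub2_E_cases)
    case (outer x y)
    then show ?thesis using t(2) by (auto simp: doubleton_eq_iff)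
  next
    case (middle x y)
    then show ?thesis using t(2) by (auto simp: doubleton_eq_iff insert_commute)
  qed
qed

lemma sub2_fibre_subsetE:
  obtains a b where "{t \<in> sub2_E E. sub2_origin t = e}
     \<subseteq> {{Inl a, Inr (a, b)}, {Inl b, Inr (b, a)}, {Inr (a, b), Inr (b, a)}}"
proof (cases "{t \<in> sub2_E E. sub2_origin t = e} = {}")
  case True
  then show ?thesis using that by (metis empty_subsetI)
next
  case False
  then obtain t where "t \<in> sub2_E E" "sub2_origin t = e" by blast
  then obtain a b where "e = {a, b}" by (cases rule: sub2_E_cases) auto
  then show ?thesis using that sub2_fibre_subset[of E a b] by blast
qed

lemma finite_sub2_fibre: "finite {t \<in> sub2_E E. sub2_origin t = e}"
proof -
  obtain a b where "{t \<in> sub2_E E. sub2_origin t = e}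
      \<subseteq> {{Inl a, Inr (a, b)}, {Inl b, Inr (b, a)}, {Inr (a, b), Inr (b, a)}}"
    by (rule sub2_fibre_subsetE)
  then show ?thesis by (rule finite_subset) simp
qed

lemma card_sub2_fibre_le: "card {t \<in> sub2_E E. sub2_origin t = e} \<le> 3"
proof -
  obtain a b where sub: "{t \<in> sub2_E E. sub2_origin t = e}
      \<subseteq> {{Inl a, Inr (a, b)}, {Inl b, Inr (b, a)}, {Inr (a, b), Inr (b, a)}}"
    by (rule sub2_fibre_subsetE)
  have "card {t \<in> sub2_E E. sub2_origin t = e}
          \<le> card {{Inl a, Inr (a, b)}, {Inl b, Inr (b, a)}, {Inr (a, b), Inr (b, a)}}"
    using sub by (rule card_mono[rotated]) simp
  also have "\<dots> \<le> 3" by (simp add: card_insert_le_m1)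
  finally show ?thesis .
qed

lemma sub2_E_eq_UN_fibres: "sub2_E E = (\<Union>e\<in>E. {t \<in> sub2_E E. sub2_origin t = e})"
  using sub2_origin_in_edges by blast

lemma finite_sub2_E:
  assumes "finite E"
  shows "finite (sub2_E E)"
proof -
  have "finite (\<Union>e\<in>E. {t \<in> sub2_E E. sub2_origin t = e})"
    using assms finite_sub2_fibre by blast
  then show ?thesis by (simp only: sub2_E_eq_UN_fibres[symmetric])
qed

lemma card_sub2_E_le:
  assumes "finite E"
  shows "card (sub2_E E) \<le> 3 * card E"
proof -
  have "card (sub2_E E) = card (\<Union>e\<in>E. {t \<in> sub2_E E. sub2_origin t = e})"
    by (rule arg_cong[OF sub2_E_eq_UN_fibres])
  also have "\<dots> \<le> (\<Sum>e\<in>E. card {t \<in> sub2_E E. sub2_origin t = e})"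
    by (rule card_UN_le[OF assms])
  also have "\<dots> \<le> (\<Sum>e\<in>E. 3)" by (intro sum_mono card_sub2_fibre_le)
  finally show ?thesis by simp
qed

lemma sub2_E_edges_at_Inr:
  assumes "x \<noteq> y" "{x, y} \<in> E"
  shows "{t \<in> sub2_E E. Inr (x, y) \<in> t} = {{Inl x, Inr (x, y)}, {Inr (x, y), Inr (y, x)}}"
proof
  show "{t \<in> sub2_E E. Inr (x, y) \<in> t} \<subseteq> {{Inl x, Inr (x, y)}, {Inr (x, y), Inr (y, x)}}"
    by (auto elim: sub2_E_cases)
  show "{{Inl x, Inr (x, y)}, {Inr (x, y), Inr (y, x)}} \<subseteq> {t \<in> sub2_E E. Inr (x, y) \<in> t}"
    using sub2_E_outer[OF assms] sub2_E_middle[OF assms] by auto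
qed

lemma degree_sub2_Inr:
  assumes "x \<noteq> y" "{x, y} \<in> E"
    and "{Inl x, Inr (x, y)} \<notin> S" "{Inr (x, y), Inr (y, x)} \<notin> S"
  shows "degree (sub2_E E - S) (Inr (x, y)) = 2"
proof -
  have "{t \<in> sub2_E E - S. Inr (x, y) \<in> t} = {{Inl x, Inr (x, y)}, {Inr (x, y), Inr (y, x)}}"
    using sub2_E_edges_at_Inr[OF assms(1,2)] assms(3,4) by blast
  then show ?thesis unfolding degree_def by (simp add: doubleton_eq_iff)
qed

lemma edge_irregulator_sub2_meets_path:
  assumes irr: "edge_irregulator (sub2_V V E) (sub2_E E) S"
    and xy: "x \<noteq> y" "{x, y} \<in> E"
  shows "{x, y} \<in> sub2_origin ` S"
proof (rule ccontr)
  assume "{x, y} \<notin> sub2_origin ` S"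
  then have kept: "s \<notin> S" if "sub2_origin s = {x, y}" for s
    using that by force
  have yx: "y \<noteq> x" "{y, x} \<in> E" using xy by (auto simp: insert_commute)
  have "degree (sub2_E E - S) (Inr (x, y)) = 2"
    using xy by (intro degree_sub2_Inr kept) simp_all
  moreover have "degree (sub2_E E - S) (Inr (y, x)) = 2"
    using yx by (intro degree_sub2_Inr kept) (simp_all add: insert_commute)
  moreover have "{Inr (x, y), Inr (y, x)} \<in> sub2_E E - S"
    using sub2_E_middle[OF xy] kept[of "{Inr (x, y), Inr (y, x)}"] by simp
  moreover have "Inr (x, y) \<in> sub2_V V E" "Inr (y, x) \<in> sub2_V V E"
    unfolding sub2_V_def using xy yx by auto
  ultimately show False
    using irr xy(1) unfolding edge_irregulator_def locally_irregular_def by auto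
qed

lemma card_edges_le_sub2_irregulator:
  assumes G: "simple_graph V E" and irr: "edge_irregulator (sub2_V V E) (sub2_E E) S"
  shows "card E \<le> card S"
proof (rule surj_card_le)
  have "S \<subseteq> sub2_E E" using irr unfolding edge_irregulator_def by simp
  then show "finite S"
    using finite_sub2_E[OF simple_graph_finite_edges[OF G]] by (rule finite_subset)
  show "E \<subseteq> sub2_origin ` S"
  proof
    fix e assume "e \<in> E"
    then obtain x y where "x \<noteq> y" "e = {x, y}" using G unfolding simple_graph_def by blast
    then show "e \<in> sub2_origin ` S"
      using edge_irregulator_sub2_meets_path[OF irr] \<open>e \<in> E\<close> by blast
  qed
qed

theorem theorem1:
  fixes V :: "'a set" and E :: "'a set set"
  assumes "simple_graph V E"
  shows "real (Ie (sub2_V V E) (sub2_E E)) \<ge> real (card (sub2_E E)) / 3"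
proof -
  obtain S where S: "edge_irregulator (sub2_V V E) (sub2_E E) S"
    "card S = Ie (sub2_V V E) (sub2_E E)"
    using Ie_attained by blast
  have "card (sub2_E E) \<le> 3 * card E"
    using card_sub2_E_le[OF simple_graph_finite_edges[OF assms]] .
  also have "\<dots> \<le> 3 * card S"
    using card_edges_le_sub2_irregulator[OF assms S(1)] by simp
  finally show ?thesis using S(2) by linarith
qed

end
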